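(* Let $f:[0,\infty)\to\mathbb{R}$ be a continuous superquadratic function and let $A\in\mathbb{M}_n^+$ be positive semidefinite. Then for every orthonormal basis $\{\mathbf{u}_1,\dots,\mathbf{u}_n\}$ of $\mathbb{C}^n$, $$\sum_{j=1}^n f(\langle A\mathbf{u}_j,\mathbf{u}_j\rangle)+\sum_{j=1}^n\big\langle f(|A-\langle A\mathbf{u}_j,\mathbf{u}_j\rangle I|)\mathbf{u}_j,\mathbf{u}_j\big\rangle\le \mathrm{Tr}\, f(A).$$ Moreover, equality holds if $f$ is non-negative and $\mathbf{u}_1,\dots,\mathbf{u}_n$ are eigenvectors of $A$.
   Context: A function $f:[0,\infty)\to\mathbb{R}$ is called superquadratic if for every $s\ge 0$ there exists a constant $C_s\in\mathbb{R}$ such that $f(t)\ge f(s)+C_s(t-s)+f(|t-s|)$ for all $t\ge0$. $f(X)$ is defined by the spectral functional calculus, $|X|=(X^*X)^{1/2}$, $\langle\cdot,\cdot\rangle$ is the standard inner product on $\mathbb{C}^n$, and $\mathrm{Tr}$ is the usual matrix trace. *)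

theory Defs
  imports "HOL-Analysis.Analysis" "HOL-Library.Complex_Order"
begin

text \<open>Complex n x n matrices are rendered as complex^'n^'n (n = CARD('n)).\<close>

definition superquadratic :: "(real \<Rightarrow> real) \<Rightarrow> bool" where
  "superquadratic f \<longleftrightarrow>
     (\<forall>s\<ge>0. \<exists>C. \<forall>t\<ge>0. f t \<ge> f s + C * (t - s) + f \<bar>t - s\<bar>)"

definition cinner :: "complex^'n \<Rightarrow> complex^'n \<Rightarrow> complex" where
  "cinner x y = (\<Sum>i\<in>UNIV. x$i * cnj (y$i))"

definition adjoint_mat :: "complex^'n^'n \<Rightarrow> complex^'n^'n" where
  "adjoint_mat A = (\<chi> i j. cnj (A$j$i))"

definition unitary_mat :: "complex^'n^'n \<Rightarrow> bool" where
  "unitary_mat U \<longleftrightarrow> adjoint_mat U ** U = mat 1 \<and> U ** adjoint_mat U = mat 1"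

definition hermitian_mat :: "complex^'n^'n \<Rightarrow> bool" where
  "hermitian_mat A \<longleftrightarrow> adjoint_mat A = A"

text \<open>Positive semidefinite: \<langle>Ax,x\<rangle> \<ge> 0 for all x (complex order: real and nonnegative).\<close>
definition psd_mat :: "complex^'n^'n \<Rightarrow> bool" where
  "psd_mat A \<longleftrightarrow> (\<forall>x. cinner (A *v x) x \<ge> 0)"

definition diag_real_mat :: "complex^'n^'n \<Rightarrow> bool" where
  "diag_real_mat D \<longleftrightarrow> (\<forall>i j. i \<noteq> j \<longrightarrow> D$i$j = 0) \<and> (\<forall>i. D$i$i \<in> \<real>)"

definition mat_fun :: "(real \<Rightarrow> real) \<Rightarrow> complex^'n^'n \<Rightarrow> complex^'n^'n" where
  "mat_fun f X = (THE B. \<exists>U D. unitary_mat U \<and> diag_real_mat D \<and>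
       X = U ** D ** adjoint_mat U \<and>
       B = U ** (\<chi> i j. if i = j then complex_of_real (f (Re (D$i$i))) else 0) ** adjoint_mat U)"

definition mat_abs :: "complex^'n^'n \<Rightarrow> complex^'n^'n" where
  "mat_abs X = mat_fun sqrt (adjoint_mat X ** X)"

definition orthonormal_basis :: "('n::finite \<Rightarrow> complex^'n) \<Rightarrow> bool" where
  "orthonormal_basis u \<longleftrightarrow> (\<forall>j k. cinner (u j) (u k) = (if j = k then 1 else 0))"

definition is_eigenvector :: "complex^'n^'n \<Rightarrow> complex^'n \<Rightarrow> bool" where
  "is_eigenvector A v \<longleftrightarrow> v \<noteq> 0 \<and> (\<exists>c. A *v v = c *s v)"

end

theory Submission
  imports Defs
begin

text \<open>Diagonalise \<open>A = U diag(d) U*\<close> with \<open>U\<close> unitary and \<open>d \<ge> 0\<close>. For a unit vector \<open>x\<close> the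
  numbers \<open>w\<^sub>i = |(U* x)\<^sub>i|\<^sup>2\<close> are probability weights, and every quantity in the theorem is a
  weighted average: \<open>\<langle>Ax,x\<rangle> = \<Sum> w\<^sub>i d\<^sub>i = \<sigma>\<close>, \<open>\<langle>f(|A - \<sigma> I|)x,x\<rangle> = \<Sum> w\<^sub>i f|d\<^sub>i - \<sigma>|\<close> and
  \<open>\<langle>f(A)x,x\<rangle> = \<Sum> w\<^sub>i f(d\<^sub>i)\<close>. The inequality is then Jensen's inequality for superquadratic
  functions, obtained by averaging the defining inequality at \<open>s = \<sigma>\<close>, and summing over an
  orthonormal basis gives the trace. If \<open>x\<close> is an eigenvector, the weights are concentrated on
  eigenvalues equal to \<open>\<sigma>\<close>, and \<open>f(0) = 0\<close> for non-negative superquadratic \<open>f\<close> gives equality.\<close>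

section \<open>The inner product on \<open>\<complex>\<^sup>n\<close>\<close>

lemma cinner_add_left: "cinner (x + y) z = cinner x z + cinner y z"
  by (simp add: cinner_def distrib_right sum.distrib)

lemma cinner_add_right: "cinner x (y + z) = cinner x y + cinner x z"
  by (simp add: cinner_def distrib_left sum.distrib)

lemma cinner_diff_left: "cinner (x - y) z = cinner x z - cinner y z"
  by (simp add: cinner_def left_diff_distrib sum_subtractf)

lemma cinner_scale_left: "cinner (c *s x) y = c * cinner x y"
  by (simp add: cinner_def sum_distrib_left mult.assoc)

lemma cinner_scale_right: "cinner x (c *s y) = cnj c * cinner x y"
  by (simp add: cinner_def sum_distrib_left mult_ac)

lemma cinner_sum_left: "cinner (\<Sum>l\<in>K. f l) z = (\<Sum>l\<in>K. cinner (f l) z)"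
  unfolding cinner_def sum_component sum_distrib_right by (rule sum.swap)

lemma cinner_commute: "cinner y x = cnj (cinner x y)"
  by (simp add: cinner_def mult.commute)

lemma cinner_zero_left [simp]: "cinner 0 x = 0"
  by (simp add: cinner_def)

lemma cinner_self: "cinner x x = complex_of_real ((norm x)\<^sup>2)"
proof -
  have "(norm x)\<^sup>2 = (\<Sum>i\<in>UNIV. (cmod (x$i))\<^sup>2)"
    by (simp add: norm_vec_def L2_set_def sum_nonneg)
  then have "complex_of_real ((norm x)\<^sup>2) = (\<Sum>i\<in>UNIV. complex_of_real ((cmod (x$i))\<^sup>2))"
    by simp
  also have "\<dots> = cinner x x"
    unfolding cinner_def by (rule sum.cong) (auto simp: complex_norm_square[symmetric])
  finally show ?thesis ..
qed

lemma cinner_self_eq_1_iff: "cinner x x = 1 \<longleftrightarrow> norm x = 1"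
proof -
  have "(norm x)\<^sup>2 = 1 \<longleftrightarrow> norm x = 1"
    by (smt (verit) norm_ge_zero power2_eq_1_iff)
  then show ?thesis
    by (metis cinner_self of_real_eq_1_iff)
qed

lemma cinner_adjoint: "cinner (M *v x) y = cinner x (adjoint_mat M *v y)"
proof -
  have "cinner (M *v x) y = (\<Sum>i\<in>UNIV. \<Sum>j\<in>UNIV. M$i$j * x$j * cnj (y$i))"
    unfolding cinner_def matrix_vector_mult_def by (simp add: sum_distrib_right)
  also have "\<dots> = (\<Sum>j\<in>UNIV. \<Sum>i\<in>UNIV. M$i$j * x$j * cnj (y$i))"
    by (rule sum.swap)
  also have "\<dots> = cinner x (adjoint_mat M *v y)"
    unfolding cinner_def matrix_vector_mult_def adjoint_mat_def
    by (simp add: sum_distrib_left mult_ac)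
  finally show ?thesis .
qed

lemma matrix_vector_mult_scale:
  fixes M :: "complex^'n^'m"
  shows "M *v (c *s x) = c *s (M *v x)"
  by (simp add: vec_eq_iff matrix_vector_mult_def sum_distrib_left mult.left_commute)

lemma continuous_on_cinner [continuous_intros]:
  "continuous_on S f \<Longrightarrow> continuous_on S g \<Longrightarrow> continuous_on S (\<lambda>x. cinner (f x) (g x))"
  unfolding cinner_def by (intro continuous_intros)

lemma continuous_on_matrix_vector_mult [continuous_intros]:
  "continuous_on S f \<Longrightarrow> continuous_on S (\<lambda>x. (A::complex^'n^'m) *v f x)"
  unfolding matrix_vector_mult_def by (intro continuous_intros)

lemma scaleR_conv_of_real_scale: "c *\<^sub>R (x::complex^'n) = complex_of_real c *s x"
  by (simp add: vec_eq_iff) (simp add: scaleR_conv_of_real)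

lemma norm_of_real_scale: "norm (complex_of_real c *s (x::complex^'n)) = \<bar>c\<bar> * norm x"
  by (metis scaleR_conv_of_real_scale norm_scaleR)

lemma subspace_if_vec_subspace:
  fixes S :: "(complex^'n) set"
  shows "vec.subspace S \<Longrightarrow> subspace S"
  by (simp add: subspace_def vec.subspace_def scaleR_conv_of_real_scale)

section \<open>Spectral theorem for positive semidefinite matrices\<close>

text \<open>Positivity \<open>\<langle>Ax,x\<rangle> \<ge> 0\<close> is taken in the complex order, so it already says that the
  quadratic form is real; polarization then gives self-adjointness.\<close>
lemma psd_mat_selfadjoint:
  assumes "psd_mat A"
  shows "cinner (A *v x) y = cinner x (A *v y)"
proof -
  define B where "B x y = cinner (A *v x) y" for x y
  have real: "Im (B z z) = 0" for z
    using assms unfolding psd_mat_def less_eq_complex_def B_def by auto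
  have expand: "B (x + c *s y) (x + c *s y) = B x x + cnj c * B x y + c * B y x + c * cnj c * B y y" for c
    unfolding B_def
    by (simp add: matrix_vector_mult_scale matrix_vector_right_distrib cinner_add_left
        cinner_add_right cinner_scale_left cinner_scale_right algebra_simps)
  have "Im (B x y + B y x) = 0"
    using arg_cong[where f=Im, OF expand[of 1]] real[of x] real[of y] real[of "x + 1 *s y"] by simp
  moreover have "Re (B y x - B x y) = 0"
    using arg_cong[where f=Im, OF expand[of \<i>]] real[of x] real[of y] real[of "x + \<i> *s y"] by simp
  ultimately have "B x y = cnj (B y x)"
    by (simp add: complex_eq_iff)
  then show ?thesis
    unfolding B_def by (metis cinner_commute)
qed

lemma linear_coeff_zero_if_quadratic_nonpos:
  fixes p q :: real
  assumes "\<And>t. t * p + t\<^sup>2 * q \<le> 0"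
  shows "p = 0"
proof (rule ccontr)
  assume p: "p \<noteq> 0"
  define a where "a = \<bar>q\<bar> + 1"
  have a: "a > 0" "\<bar>q\<bar> < a"
    by (auto simp: a_def)
  define t where "t = p / (2 * a)"
  have "t\<^sup>2 * q \<ge> - (t\<^sup>2 * \<bar>q\<bar>)"
    using mult_left_mono[of "-\<bar>q\<bar>" q "t\<^sup>2"] by simp
  moreover have "t * p - t\<^sup>2 * \<bar>q\<bar> = p\<^sup>2 * (2 * a - \<bar>q\<bar>) / (4 * a\<^sup>2)"
    using a by (simp add: t_def field_simps power2_eq_square)
  moreover have "p\<^sup>2 * (2 * a - \<bar>q\<bar>) / (4 * a\<^sup>2) > 0"
    using a p by (intro divide_pos_pos mult_pos_pos) auto
  ultimately show False
    using assms[of t] by linarith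
qed

text \<open>At a maximiser of the Rayleigh quotient the first variation along every direction of the
  subspace vanishes.\<close>
lemma rayleigh_maximizer_is_eigenvector:
  fixes A :: "complex^'n^'n"
  assumes sa: "\<And>x y. cinner (A *v x) y = cinner x (A *v y)"
    and S: "vec.subspace S" and inv: "\<And>x. x \<in> S \<Longrightarrow> A *v x \<in> S"
    and x0: "x0 \<in> S" "cinner x0 x0 = 1"
    and max: "\<And>y. y \<in> S \<Longrightarrow> Re (cinner (A *v y) y) \<le> Re (cinner (A *v x0) x0) * Re (cinner y y)"
  shows "A *v x0 = complex_of_real (Re (cinner (A *v x0) x0)) *s x0"
proof -
  define M where "M = Re (cinner (A *v x0) x0)"
  have first_variation: "Re (cinner (A *v x0) y) = M * Re (cinner x0 y)" if y: "y \<in> S" for y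
  proof -
    define a where "a = Re (cinner (A *v x0) y)"
    define b where "b = Re (cinner x0 y)"
    have "t * (2 * (a - M * b)) + t\<^sup>2 * (Re (cinner (A *v y) y) - M * Re (cinner y y)) \<le> 0" for t
    proof -
      define z where "z = x0 + complex_of_real t *s y"
      have "z \<in> S"
        unfolding z_def using S x0(1) y by (intro vec.subspace_add vec.subspace_scale)
      have "Re (cinner (A *v y) x0) = a"
        by (subst cinner_commute) (simp add: sa a_def)
      then have "Re (cinner (A *v z) z) = M + 2 * t * a + t\<^sup>2 * Re (cinner (A *v y) y)"
        by (simp add: z_def M_def a_def matrix_vector_mult_scale matrix_vector_right_distrib
            cinner_add_left cinner_add_right cinner_scale_left cinner_scale_right power2_eq_square
            algebra_simps)
      moreover have "Re (cinner y x0) = b"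
        by (subst cinner_commute) (simp add: b_def)
      then have "Re (cinner z z) = 1 + 2 * t * b + t\<^sup>2 * Re (cinner y y)"
        using x0(2) by (simp add: z_def b_def cinner_add_left cinner_add_right cinner_scale_left
            cinner_scale_right power2_eq_square algebra_simps)
      ultimately show ?thesis
        using max[OF \<open>z \<in> S\<close>] by (simp add: M_def algebra_simps)
    qed
    then have "2 * (a - M * b) = 0"
      by (rule linear_coeff_zero_if_quadratic_nonpos)
    then show ?thesis
      by (simp add: a_def b_def)
  qed
  define r where "r = A *v x0 - complex_of_real M *s x0"
  have "r \<in> S"
    unfolding r_def using S inv x0(1) by (intro vec.subspace_diff vec.subspace_scale)
  then have "Re (cinner r r) = 0"
    using first_variation by (simp add: r_def cinner_diff_left cinner_scale_left)
  then show ?thesis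
    by (simp add: cinner_self r_def M_def)
qed

lemma selfadjoint_invariant_subspace_unit_eigenvector:
  fixes A :: "complex^'n^'n"
  assumes sa: "\<And>x y. cinner (A *v x) y = cinner x (A *v y)"
    and S: "vec.subspace S" and inv: "\<And>x. x \<in> S \<Longrightarrow> A *v x \<in> S"
    and "x1 \<in> S" "x1 \<noteq> 0"
  shows "\<exists>x\<in>S. cinner x x = 1 \<and> (\<exists>r::real. A *v x = complex_of_real r *s x)"
proof -
  define g where "g x = Re (cinner (A *v x) x)" for x
  define normalize where "normalize x = complex_of_real (1 / norm x) *s x" for x :: "complex^'n"
  have normalize: "normalize y \<in> S \<inter> sphere 0 1" "g (normalize y) = g y / (norm y)\<^sup>2"
    if "y \<in> S" "y \<noteq> 0" for y
  proof -
    have "norm (normalize y) = 1"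
      using that unfolding normalize_def norm_of_real_scale by simp
    then show "normalize y \<in> S \<inter> sphere 0 1"
      using that S by (simp add: normalize_def vec.subspace_scale)
    have "cinner (A *v normalize y) (normalize y) = complex_of_real ((1 / norm y)\<^sup>2) * cinner (A *v y) y"
      unfolding normalize_def matrix_vector_mult_scale cinner_scale_left cinner_scale_right
      by (simp add: power2_eq_square)
    then show "g (normalize y) = g y / (norm y)\<^sup>2"
      by (simp add: g_def power_one_over)
  qed
  have "compact (S \<inter> sphere 0 1)"
    using S by (intro closed_Int_compact closed_subspace subspace_if_vec_subspace compact_sphere)
  moreover have "S \<inter> sphere 0 1 \<noteq> {}"
    using normalize(1) \<open>x1 \<in> S\<close> \<open>x1 \<noteq> 0\<close> by blast
  moreover have "continuous_on (S \<inter> sphere 0 1) g"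
    unfolding g_def by (intro continuous_intros)
  ultimately obtain x0 where x0: "x0 \<in> S \<inter> sphere 0 1" "\<forall>y\<in>S \<inter> sphere 0 1. g y \<le> g x0"
    using continuous_attains_sup[of "S \<inter> sphere 0 1" g] by blast
  have "g y \<le> g x0 * Re (cinner y y)" if "y \<in> S" for y
  proof (cases "y = 0")
    case False
    then have "g y / (norm y)\<^sup>2 \<le> g x0"
      using x0(2) normalize[OF that] by metis
    moreover have "Re (cinner y y) = (norm y)\<^sup>2"
      by (simp add: cinner_self)
    ultimately show ?thesis
      using False by (simp add: pos_divide_le_eq)
  qed (simp add: g_def)
  moreover have "cinner x0 x0 = 1"
    using x0(1) by (simp add: cinner_self_eq_1_iff)
  ultimately show ?thesis
    using rayleigh_maximizer_is_eigenvector[OF sa S inv] x0(1) unfolding g_def by blast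
qed

lemma vec_subspace_orthogonal:
  "vec.subspace {x. \<forall>v\<in>V. cinner x v = 0}"
  by (simp add: vec.subspace_def cinner_add_left cinner_scale_left)

lemma exists_nonzero_orthogonal_to_orthonormal:
  fixes w :: "'n::finite \<Rightarrow> complex^'n"
  assumes orth: "\<forall>j\<in>K. \<forall>k\<in>K. cinner (w j) (w k) = (if j = k then 1 else 0)"
    and card: "card K < CARD('n)"
  shows "\<exists>x. x \<noteq> 0 \<and> (\<forall>l\<in>K. cinner x (w l) = 0)"
proof (rule ccontr)
  assume none: "\<not> ?thesis"
  have "v \<in> vec.span (w ` K)" for v
  proof -
    define p where "p = v - (\<Sum>l\<in>K. cinner v (w l) *s w l)"
    have "cinner p (w m) = 0" if m: "m \<in> K" for m
    proof -
      have "(\<Sum>l\<in>K. cinner v (w l) * cinner (w l) (w m)) = (\<Sum>l\<in>K. if l = m then cinner v (w l) else 0)"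
        using m orth by (intro sum.cong) auto
      then show ?thesis
        using m by (simp add: p_def cinner_diff_left cinner_sum_left cinner_scale_left)
    qed
    then have "p = 0"
      using none by blast
    then have "v = (\<Sum>l\<in>K. cinner v (w l) *s w l)"
      by (simp add: p_def)
    also have "\<dots> \<in> vec.span (w ` K)"
      by (intro vec.span_sum vec.span_scale vec.span_base) auto
    finally show ?thesis .
  qed
  then have "vec.dim (UNIV :: (complex^'n) set) \<le> card (w ` K)"
    by (intro vec.dim_le_card) auto
  also have "\<dots> \<le> card K"
    by (rule card_image_le) simp
  finally show False
    using card vec_dim_card[where 'a=complex and 'n='n] by simp
qed

text \<open>Induction on the index set: the orthogonal complement of finitely many eigenvectors is
  invariant under a self-adjoint matrix, so it contains a further unit eigenvector.\<close>
lemma selfadjoint_orthonormal_eigenvectors: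
  fixes A :: "complex^'n::finite^'n" and K :: "'n set"
  assumes sa: "\<And>x y. cinner (A *v x) y = cinner x (A *v y)"
  shows "\<exists>w. (\<forall>j\<in>K. \<forall>k\<in>K. cinner (w j) (w k) = (if j = k then 1 else 0))
            \<and> (\<forall>j\<in>K. \<exists>r::real. A *v w j = complex_of_real r *s w j)"
  using finite[of K]
proof (induction K rule: finite_induct)
  case (insert a K)
  obtain w where orth: "\<forall>j\<in>K. \<forall>k\<in>K. cinner (w j) (w k) = (if j = k then 1 else 0)"
    and eig: "\<forall>j\<in>K. \<exists>r::real. A *v w j = complex_of_real r *s w j"
    using insert.IH by blast
  define S where "S = {x. \<forall>v\<in>w ` K. cinner x v = 0}"
  have inv: "A *v x \<in> S" if "x \<in> S" for x
  proof -
    have "cinner (A *v x) (w l) = 0" if "l \<in> K" for l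
      using eig \<open>x \<in> S\<close> \<open>l \<in> K\<close> by (auto simp: sa S_def cinner_scale_right)
    then show ?thesis
      by (simp add: S_def)
  qed
  have "card K < CARD('n)"
    using card_mono[of UNIV "insert a K"] insert.hyps by simp
  then obtain x1 where "x1 \<in> S" "x1 \<noteq> 0"
    using exists_nonzero_orthogonal_to_orthonormal[OF orth] by (auto simp: S_def)
  moreover have "vec.subspace S"
    unfolding S_def by (rule vec_subspace_orthogonal)
  ultimately obtain x where x: "x \<in> S" "cinner x x = 1" "\<exists>r::real. A *v x = complex_of_real r *s x"
    using selfadjoint_invariant_subspace_unit_eigenvector[OF sa _ inv] by blast
  have "cinner (w l) x = 0" if "l \<in> K" for l
    using x(1) that cinner_commute[of "w l" x] by (simp add: S_def)
  then show ?case
    using orth eig x insert.hyps(2) unfolding S_def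
    by (intro exI[of _ "w(a := x)"]) auto
qed simp

definition diagm :: "('n::finite \<Rightarrow> real) \<Rightarrow> complex^'n^'n" where
  "diagm d = (\<chi> i j. if i = j then complex_of_real (d i) else 0)"

lemma diagm_right: "(X ** diagm d)$i$j = X$i$j * complex_of_real (d j)"
  by (simp add: matrix_matrix_mult_def diagm_def if_distrib[where f="\<lambda>x. _ * x"] sum.delta' cong: if_cong)

lemma diagm_left: "(diagm d ** X)$i$j = complex_of_real (d i) * X$i$j"
  by (simp add: matrix_matrix_mult_def diagm_def if_distrib[where f="\<lambda>x. x * _"] sum.delta cong: if_cong)

lemma diagm_matrix_vector_mult: "(diagm h *v z)$i = complex_of_real (h i) * z$i"
  by (simp add: matrix_vector_mult_def diagm_def if_distrib[where f="\<lambda>x. x * _"] sum.delta cong: if_cong)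

lemma unitary_if_orthonormal_columns:
  fixes Q :: "complex^'n^'n"
  assumes "\<forall>j k. cinner (column j Q) (column k Q) = (if j = k then 1 else 0)"
  shows "unitary_mat Q"
proof -
  have "(adjoint_mat Q ** Q)$j$k = cinner (column k Q) (column j Q)" for j k
    by (simp add: matrix_matrix_mult_def adjoint_mat_def cinner_def column_def mult.commute)
  then have "adjoint_mat Q ** Q = mat 1"
    using assms by (simp add: vec_eq_iff mat_def)
  then show ?thesis
    by (simp add: unitary_mat_def matrix_left_right_inverse)
qed

lemma psd_unitary_diagonalization:
  fixes A :: "complex^'n::finite^'n"
  assumes psd: "psd_mat A"
  shows "\<exists>U d. unitary_mat U \<and> (\<forall>i. d i \<ge> 0) \<and> A = U ** diagm d ** adjoint_mat U"
proof -
  obtain w :: "'n \<Rightarrow> complex^'n"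
    where orth: "\<forall>j k. cinner (w j) (w k) = (if j = k then 1 else 0)"
      and "\<forall>j. \<exists>r::real. A *v w j = complex_of_real r *s w j"
    using selfadjoint_orthonormal_eigenvectors[OF psd_mat_selfadjoint[OF psd], of UNIV] by auto
  then obtain r where eig: "\<And>j. A *v w j = complex_of_real (r j) *s w j"
    by metis
  define U where "U = (\<chi> i j. w j $ i)"
  have col: "column j U = w j" for j
    by (simp add: U_def column_def vec_eq_iff)
  have U: "unitary_mat U"
    using orth by (intro unitary_if_orthonormal_columns) (simp add: col)
  have "(A ** U)$i$j = (U ** diagm r)$i$j" for i j
  proof -
    have "(A ** U)$i$j = (A *v w j)$i"
      by (simp add: matrix_matrix_mult_def matrix_vector_mult_def U_def)
    then show ?thesis
      by (simp add: eig diagm_right U_def mult.commute)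
  qed
  then have "A ** U = U ** diagm r"
    by (simp add: vec_eq_iff)
  then have "A = U ** diagm r ** adjoint_mat U"
    using U by (metis matrix_mul_assoc matrix_mul_rid unitary_mat_def)
  moreover have "r j \<ge> 0" for j
  proof -
    have "cinner (A *v w j) (w j) = complex_of_real (r j)"
      using orth by (simp add: eig cinner_scale_left)
    then show ?thesis
      using psd unfolding psd_mat_def less_eq_complex_def by (metis Re_complex_of_real zero_complex.sel(1))
  qed
  ultimately show ?thesis
    using U by blast
qed

section \<open>Functional calculus\<close>

lemma diagm_mult: "diagm d ** diagm e = diagm (\<lambda>i. d i * e i)"
  by (simp add: vec_eq_iff diagm_right) (simp add: diagm_def)

lemma diagm_diff: "diagm d - diagm e = diagm (\<lambda>i. d i - e i)"
  by (simp add: vec_eq_iff diagm_def)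

lemma diagm_const: "diagm (\<lambda>_. c) = mat (complex_of_real c)"
  by (simp add: vec_eq_iff diagm_def mat_def)

lemma adjoint_mat_mult: "adjoint_mat (X ** Y) = adjoint_mat Y ** adjoint_mat X"
  by (simp add: vec_eq_iff adjoint_mat_def matrix_matrix_mult_def mult.commute)

lemma adjoint_mat_adjoint_mat [simp]: "adjoint_mat (adjoint_mat X) = X"
  by (simp add: vec_eq_iff adjoint_mat_def)

lemma adjoint_mat_diagm [simp]: "adjoint_mat (diagm d) = diagm d"
  by (simp add: vec_eq_iff adjoint_mat_def diagm_def)

lemma matrix_diff_ldistrib: "X ** (Y - Z) = X ** Y - X ** (Z::complex^'n^'n)"
  by (simp add: vec_eq_iff matrix_matrix_mult_def right_diff_distrib sum_subtractf)

lemma matrix_diff_rdistrib: "(Y - Z) ** X = Y ** X - Z ** (X::complex^'n^'n)"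
  by (simp add: vec_eq_iff matrix_matrix_mult_def left_diff_distrib sum_subtractf)

lemma unitary_conj_mat:
  assumes "unitary_mat U"
  shows "U ** mat c ** adjoint_mat U = mat c"
proof -
  have "U ** mat c = (\<chi> i j. U$i$j * c)"
    by (simp add: vec_eq_iff matrix_matrix_mult_def mat_def if_distrib[where f="\<lambda>x. _ * x"]
        sum.delta' cong: if_cong)
  then have "(U ** mat c ** adjoint_mat U)$i$j = c * (U ** adjoint_mat U)$i$j" for i j
    by (simp add: matrix_matrix_mult_def sum_distrib_left mult_ac)
  then show ?thesis
    using assms by (simp add: vec_eq_iff unitary_mat_def mat_def)
qed

text \<open>If \<open>W diag(d) = diag(e) W\<close>, then \<open>W\<^sub>i\<^sub>j \<noteq> 0\<close> forces \<open>d\<^sub>j = e\<^sub>i\<close>, so \<open>W\<close> also intertwines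
  \<open>diag(g \<circ> d)\<close> and \<open>diag(g \<circ> e)\<close>; applied to \<open>W = V* U\<close> this shows that the functional
  calculus does not depend on the chosen diagonalization.\<close>
lemma unitary_diag_fun_unique:
  fixes U V :: "complex^'n::finite^'n"
  assumes U: "unitary_mat U" and V: "unitary_mat V"
    and eq: "U ** diagm d ** adjoint_mat U = V ** diagm e ** adjoint_mat V"
  shows "U ** diagm (\<lambda>i. g (d i)) ** adjoint_mat U = V ** diagm (\<lambda>i. g (e i)) ** adjoint_mat V"
proof -
  have UU: "adjoint_mat U ** U = mat 1" "U ** adjoint_mat U = mat 1"
    and VV: "adjoint_mat V ** V = mat 1" "V ** adjoint_mat V = mat 1"
    using U V by (auto simp: unitary_mat_def)
  define W where "W = adjoint_mat V ** U"
  have "W ** diagm d = adjoint_mat V ** (U ** diagm d ** adjoint_mat U) ** U"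
    by (simp add: W_def matrix_mul_assoc[symmetric] UU)
  also have "\<dots> = diagm e ** W"
    by (simp add: eq W_def matrix_mul_assoc VV)
  finally have intertwine: "W ** diagm d = diagm e ** W" .
  have "(W ** diagm (\<lambda>i. g (d i)))$i$j = (diagm (\<lambda>i. g (e i)) ** W)$i$j" for i j
  proof (cases "W$i$j = 0")
    case False
    have "W$i$j * complex_of_real (d j) = complex_of_real (e i) * W$i$j"
      using arg_cong[OF intertwine, of "\<lambda>M. M$i$j"] by (simp add: diagm_left diagm_right)
    then have "d j = e i"
      using False by (simp add: mult.commute)
    then show ?thesis
      by (simp add: diagm_left diagm_right mult.commute)
  qed (simp add: diagm_left diagm_right)
  then have "W ** diagm (\<lambda>i. g (d i)) = diagm (\<lambda>i. g (e i)) ** W"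
    by (simp add: vec_eq_iff)
  then have "V ** (W ** diagm (\<lambda>i. g (d i))) ** adjoint_mat U
      = V ** (diagm (\<lambda>i. g (e i)) ** W) ** adjoint_mat U"
    by simp
  then show ?thesis
    by (simp add: W_def matrix_mul_assoc VV) (simp add: matrix_mul_assoc[symmetric] UU)
qed

lemma mat_fun_unitary_diag:
  fixes U :: "complex^'n::finite^'n"
  assumes U: "unitary_mat U"
  shows "mat_fun g (U ** diagm d ** adjoint_mat U) = U ** diagm (\<lambda>i. g (d i)) ** adjoint_mat U"
  unfolding mat_fun_def
proof (rule the_equality)
  have "diag_real_mat (diagm d)"
    by (simp add: diag_real_mat_def diagm_def)
  moreover have "(\<chi> i j. if i = j then complex_of_real (g (Re (diagm d $ i $ i))) else 0) = diagm (\<lambda>i. g (d i))"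
    by (simp add: vec_eq_iff diagm_def)
  ultimately show "\<exists>V D. unitary_mat V \<and> diag_real_mat D \<and> U ** diagm d ** adjoint_mat U = V ** D ** adjoint_mat V \<and>
      U ** diagm (\<lambda>i. g (d i)) ** adjoint_mat U =
      V ** (\<chi> i j. if i = j then complex_of_real (g (Re (D $ i $ i))) else 0) ** adjoint_mat V"
    using U by (intro exI[of _ U] exI[of _ "diagm d"]) simp
next
  fix B
  assume "\<exists>V D. unitary_mat V \<and> diag_real_mat D \<and> U ** diagm d ** adjoint_mat U = V ** D ** adjoint_mat V \<and>
      B = V ** (\<chi> i j. if i = j then complex_of_real (g (Re (D $ i $ i))) else 0) ** adjoint_mat V"
  then obtain V D where V: "unitary_mat V" "diag_real_mat D"
    and eq: "U ** diagm d ** adjoint_mat U = V ** D ** adjoint_mat V"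
    and B: "B = V ** (\<chi> i j. if i = j then complex_of_real (g (Re (D $ i $ i))) else 0) ** adjoint_mat V"
    by blast
  define e where "e i = Re (D$i$i)" for i
  have "D = diagm e"
    using V(2) by (auto simp: vec_eq_iff diag_real_mat_def diagm_def e_def of_real_Re)
  moreover have "(\<chi> i j. if i = j then complex_of_real (g (Re (D $ i $ i))) else 0) = diagm (\<lambda>i. g (e i))"
    by (simp add: diagm_def e_def)
  ultimately show "B = U ** diagm (\<lambda>i. g (d i)) ** adjoint_mat U"
    using unitary_diag_fun_unique[OF U V(1), of d e g] eq B by simp
qed

lemma unitary_diag_minus_scalar:
  fixes U :: "complex^'n::finite^'n"
  assumes "unitary_mat U"
  shows "U ** diagm d ** adjoint_mat U - mat (complex_of_real s) = U ** diagm (\<lambda>i. d i - s) ** adjoint_mat U"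
  using unitary_conj_mat[OF assms, of "complex_of_real s"]
  by (simp add: diagm_const[symmetric] diagm_diff[symmetric] matrix_diff_ldistrib matrix_diff_rdistrib)

lemma mat_abs_unitary_diag:
  fixes U :: "complex^'n::finite^'n"
  assumes U: "unitary_mat U"
  shows "mat_abs (U ** diagm d ** adjoint_mat U) = U ** diagm (\<lambda>i. \<bar>d i\<bar>) ** adjoint_mat U"
proof -
  have "adjoint_mat (U ** diagm d ** adjoint_mat U) ** (U ** diagm d ** adjoint_mat U)
      = U ** diagm d ** (adjoint_mat U ** U) ** diagm d ** adjoint_mat U"
    by (simp add: adjoint_mat_mult matrix_mul_assoc)
  also have "\<dots> = U ** diagm (\<lambda>i. d i * d i) ** adjoint_mat U"
    using U by (simp add: unitary_mat_def diagm_mult matrix_mul_assoc[symmetric])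
  finally show ?thesis
    unfolding mat_abs_def by (simp add: mat_fun_unitary_diag[OF U] real_sqrt_mult_self)
qed

lemma cinner_unitary_diag:
  fixes U :: "complex^'n::finite^'n"
  shows "cinner ((U ** diagm h ** adjoint_mat U) *v x) x
       = complex_of_real (\<Sum>i\<in>UNIV. h i * (cmod ((adjoint_mat U *v x)$i))\<^sup>2)"
proof -
  define z where "z = adjoint_mat U *v x"
  have "cinner ((U ** diagm h ** adjoint_mat U) *v x) x = cinner (diagm h *v z) z"
    by (simp add: z_def cinner_adjoint matrix_vector_mul_assoc[symmetric] matrix_mul_assoc)
  also have "\<dots> = (\<Sum>i\<in>UNIV. complex_of_real (h i) * (z$i * cnj (z$i)))"
    unfolding cinner_def by (simp add: diagm_matrix_vector_mult mult.assoc)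
  also have "\<dots> = complex_of_real (\<Sum>i\<in>UNIV. h i * (cmod (z$i))\<^sup>2)"
    by (simp add: complex_norm_square[symmetric])
  finally show ?thesis
    by (simp add: z_def)
qed

lemma trace_eq_sum_cinner_orthonormal_basis:
  fixes M :: "complex^'n::finite^'n"
  assumes "orthonormal_basis u"
  shows "trace M = (\<Sum>j\<in>UNIV. cinner (M *v u j) (u j))"
proof -
  define Q :: "complex^'n^'n" where "Q = (\<chi> i j. u j $ i)"
  have "unitary_mat Q"
    using assms by (intro unitary_if_orthonormal_columns)
      (simp add: Q_def column_def orthonormal_basis_def)
  then have "(Q ** adjoint_mat Q)$k$i = (if k = i then 1 else 0)" for k i
    by (simp add: unitary_mat_def mat_def)
  then have completeness: "(\<Sum>j\<in>UNIV. u j $ k * cnj (u j $ i)) = (if k = i then 1 else 0)" for k i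
    by (simp add: matrix_matrix_mult_def adjoint_mat_def Q_def)
  have "(\<Sum>j\<in>UNIV. cinner (M *v u j) (u j))
      = (\<Sum>j\<in>UNIV. \<Sum>i\<in>UNIV. \<Sum>k\<in>UNIV. M$i$k * (u j $ k * cnj (u j $ i)))"
    unfolding cinner_def matrix_vector_mult_def by (simp add: sum_distrib_right mult.assoc)
  also have "\<dots> = (\<Sum>i\<in>UNIV. \<Sum>j\<in>UNIV. \<Sum>k\<in>UNIV. M$i$k * (u j $ k * cnj (u j $ i)))"
    by (rule sum.swap)
  also have "\<dots> = (\<Sum>i\<in>UNIV. \<Sum>k\<in>UNIV. \<Sum>j\<in>UNIV. M$i$k * (u j $ k * cnj (u j $ i)))"
    by (rule sum.cong[OF refl], rule sum.swap)
  also have "\<dots> = (\<Sum>i\<in>UNIV. \<Sum>k\<in>UNIV. M$i$k * (if k = i then 1 else 0))"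
    by (simp add: sum_distrib_left[symmetric] completeness)
  also have "\<dots> = trace M"
    by (simp add: trace_def if_distrib[where f="\<lambda>x. _ * x"] sum.delta' cong: if_cong)
  finally show ?thesis ..
qed

section \<open>Superquadratic functions\<close>

lemma superquadratic_jensen:
  fixes x w :: "'i \<Rightarrow> real"
  assumes f: "superquadratic f" and "finite I"
    and x: "\<And>i. i \<in> I \<Longrightarrow> x i \<ge> 0" and w: "\<And>i. i \<in> I \<Longrightarrow> w i \<ge> 0"
    and sum_w: "(\<Sum>i\<in>I. w i) = 1"
  shows "f (\<Sum>i\<in>I. w i * x i) + (\<Sum>i\<in>I. w i * f \<bar>x i - (\<Sum>k\<in>I. w k * x k)\<bar>)
           \<le> (\<Sum>i\<in>I. w i * f (x i))"
proof -
  define \<sigma> where "\<sigma> = (\<Sum>i\<in>I. w i * x i)"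
  have "\<sigma> \<ge> 0"
    unfolding \<sigma>_def using x w by (intro sum_nonneg) simp
  then obtain C where C: "\<And>t. t \<ge> 0 \<Longrightarrow> f \<sigma> + C * (t - \<sigma>) + f \<bar>t - \<sigma>\<bar> \<le> f t"
    using f unfolding superquadratic_def by blast
  have "(\<Sum>i\<in>I. w i * (f \<sigma> + C * (x i - \<sigma>) + f \<bar>x i - \<sigma>\<bar>))
      = f \<sigma> * (\<Sum>i\<in>I. w i) + C * ((\<Sum>i\<in>I. w i * x i) - \<sigma> * (\<Sum>i\<in>I. w i))
        + (\<Sum>i\<in>I. w i * f \<bar>x i - \<sigma>\<bar>)"
    by (simp add: algebra_simps sum.distrib sum_distrib_left sum_subtractf)
  also have "\<dots> = f \<sigma> + (\<Sum>i\<in>I. w i * f \<bar>x i - \<sigma>\<bar>)"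
    by (simp add: sum_w \<sigma>_def)
  finally have "f \<sigma> + (\<Sum>i\<in>I. w i * f \<bar>x i - \<sigma>\<bar>)
      = (\<Sum>i\<in>I. w i * (f \<sigma> + C * (x i - \<sigma>) + f \<bar>x i - \<sigma>\<bar>))" ..
  also have "\<dots> \<le> (\<Sum>i\<in>I. w i * f (x i))"
    using C x w by (intro sum_mono mult_left_mono) auto
  finally show ?thesis
    by (simp add: \<sigma>_def)
qed

lemma superquadratic_at_0_nonpos: "superquadratic f \<Longrightarrow> f 0 \<le> 0"
  unfolding superquadratic_def by force

lemma weighted_sum_concentrated:
  fixes x w :: "'i \<Rightarrow> real"
  assumes "finite I" and f0: "f 0 = 0" and sum_w: "(\<Sum>i\<in>I. w i) = 1"
    and concentrated: "\<And>i. i \<in> I \<Longrightarrow> w i \<noteq> 0 \<Longrightarrow> x i = s"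
  shows "f (\<Sum>i\<in>I. w i * x i) + (\<Sum>i\<in>I. w i * f \<bar>x i - (\<Sum>k\<in>I. w k * x k)\<bar>)
           = (\<Sum>i\<in>I. w i * f (x i))"
proof -
  have "(\<Sum>i\<in>I. w i * g (x i)) = g s" for g :: "real \<Rightarrow> real"
  proof -
    have "(\<Sum>i\<in>I. w i * g (x i)) = (\<Sum>i\<in>I. w i * g s)"
      using concentrated by (intro sum.cong) auto
    then show ?thesis
      by (simp add: sum_distrib_right[symmetric] sum_w)
  qed
  from this[of id] this[of "\<lambda>t. f \<bar>t - s\<bar>"] this[of f] show ?thesis
    by (simp add: f0)
qed

lemma sum_spectral_weights:
  fixes U :: "complex^'n::finite^'n"
  assumes "unitary_mat U" and "cinner x x = 1"
  shows "(\<Sum>i\<in>UNIV. (cmod ((adjoint_mat U *v x)$i))\<^sup>2) = 1"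
proof -
  have "U ** diagm (\<lambda>_. 1) ** adjoint_mat U = mat 1"
    using unitary_conj_mat[OF assms(1), of 1] by (simp add: diagm_const)
  then have "cinner (mat 1 *v x) x = complex_of_real (\<Sum>i\<in>UNIV. 1 * (cmod ((adjoint_mat U *v x)$i))\<^sup>2)"
    using cinner_unitary_diag[of U "\<lambda>_. 1" x] by simp
  then show ?thesis
    by (simp only: matrix_vector_mul_lid mult_1 assms(2)) (metis of_real_eq_1_iff)
qed

lemma eigenvector_unitary_diag_weights:
  fixes U :: "complex^'n::finite^'n"
  assumes U: "unitary_mat U" and eig: "(U ** diagm d ** adjoint_mat U) *v x = c *s x"
    and "(adjoint_mat U *v x)$i \<noteq> 0"
  shows "complex_of_real (d i) = c"
proof -
  have "diagm d *v (adjoint_mat U *v x) = adjoint_mat U *v ((U ** diagm d ** adjoint_mat U) *v x)"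
    using U by (simp add: matrix_vector_mul_assoc matrix_mul_assoc unitary_mat_def)
  also have "\<dots> = c *s (adjoint_mat U *v x)"
    by (simp add: eig matrix_vector_mult_scale)
  finally have "complex_of_real (d i) * (adjoint_mat U *v x)$i = c * (adjoint_mat U *v x)$i"
    by (metis diagm_matrix_vector_mult vector_smult_component)
  with assms(3) show ?thesis
    by simp
qed

lemma superquadratic_cinner_unitary_diag:
  fixes U :: "complex^'n::finite^'n"
  assumes f: "superquadratic f" and U: "unitary_mat U" and d: "\<forall>i. d i \<ge> 0"
    and x: "cinner x x = 1"
  defines "A \<equiv> U ** diagm d ** adjoint_mat U"
  defines "lhs \<equiv> complex_of_real (f (Re (cinner (A *v x) x)))
      + cinner (mat_fun f (mat_abs (A - mat (cinner (A *v x) x))) *v x) x"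
  shows "lhs \<le> cinner (mat_fun f A *v x) x"
    and "(\<forall>t\<ge>0. f t \<ge> 0) \<Longrightarrow> is_eigenvector A x \<Longrightarrow> lhs = cinner (mat_fun f A *v x) x"
proof -
  define w where "w i = (cmod ((adjoint_mat U *v x)$i))\<^sup>2" for i
  define \<sigma> where "\<sigma> = (\<Sum>i\<in>UNIV. w i * d i)"
  have \<sigma>: "cinner (A *v x) x = complex_of_real \<sigma>"
    unfolding A_def cinner_unitary_diag w_def[symmetric] by (simp add: \<sigma>_def mult.commute)
  have "lhs = complex_of_real (f \<sigma> + (\<Sum>i\<in>UNIV. w i * f \<bar>d i - \<sigma>\<bar>))"
    unfolding lhs_def \<sigma> A_def unitary_diag_minus_scalar[OF U] mat_abs_unitary_diag[OF U]
      mat_fun_unitary_diag[OF U] cinner_unitary_diag w_def[symmetric]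
    by (simp add: \<sigma>_def mult.commute)
  moreover have rhs: "cinner (mat_fun f A *v x) x = complex_of_real (\<Sum>i\<in>UNIV. w i * f (d i))"
    unfolding A_def mat_fun_unitary_diag[OF U] cinner_unitary_diag w_def[symmetric]
    by (simp add: mult.commute)
  moreover have sum_w: "(\<Sum>i\<in>UNIV. w i) = 1"
    using sum_spectral_weights[OF U x] by (simp add: w_def)
  ultimately show "lhs \<le> cinner (mat_fun f A *v x) x"
    using superquadratic_jensen[OF f, of UNIV d w] d
    by (simp add: less_eq_complex_def \<sigma>_def w_def)
  assume "\<forall>t\<ge>0. f t \<ge> 0" and "is_eigenvector A x"
  then have f0: "f 0 = 0"
    using superquadratic_at_0_nonpos[OF f] by force
  obtain c where c: "A *v x = c *s x"
    using \<open>is_eigenvector A x\<close> unfolding is_eigenvector_def by blast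
  have "c = complex_of_real \<sigma>"
    using \<sigma> x by (simp add: c cinner_scale_left)
  then have "d i = \<sigma>" if "w i \<noteq> 0" for i
    using eigenvector_unitary_diag_weights[OF U c[unfolded A_def]] that by (simp add: w_def)
  then show "lhs = cinner (mat_fun f A *v x) x"
    using \<open>lhs = _\<close> rhs weighted_sum_concentrated[of UNIV f w d \<sigma>] f0 sum_w
    by (simp add: \<sigma>_def)
qed

theorem proposition3p3:
  fixes f :: "real \<Rightarrow> real" and A :: "complex^'n^'n" and u :: "'n \<Rightarrow> complex^'n"
  assumes "continuous_on {0..} f"
    and "superquadratic f"
    and "psd_mat A"
    and "orthonormal_basis u"
  shows "(\<Sum>j\<in>UNIV. complex_of_real (f (Re (cinner (A *v u j) (u j)))))
           + (\<Sum>j\<in>UNIV. cinner (mat_fun f (mat_abs (A - mat (cinner (A *v u j) (u j)))) *v u j) (u j))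
         \<le> trace (mat_fun f A)
       \<and> ((\<forall>t\<ge>0. f t \<ge> 0) \<and> (\<forall>j. is_eigenvector A (u j)) \<longrightarrow>
         (\<Sum>j\<in>UNIV. complex_of_real (f (Re (cinner (A *v u j) (u j)))))
           + (\<Sum>j\<in>UNIV. cinner (mat_fun f (mat_abs (A - mat (cinner (A *v u j) (u j)))) *v u j) (u j))
         = trace (mat_fun f A))"
proof -
  obtain U d where U: "unitary_mat U" and d: "\<forall>i. d i \<ge> 0" and A: "A = U ** diagm d ** adjoint_mat U"
    using psd_unitary_diagonalization[OF assms(3)] by blast
  have unit: "cinner (u j) (u j) = 1" for j
    using assms(4) by (simp add: orthonormal_basis_def)
  note pointwise = superquadratic_cinner_unitary_diag[OF assms(2) U d unit, folded A]
  have trace: "trace (mat_fun f A) = (\<Sum>j\<in>UNIV. cinner (mat_fun f A *v u j) (u j))"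
    using assms(4) by (rule trace_eq_sum_cinner_orthonormal_basis)
  show ?thesis
    unfolding trace sum.distrib[symmetric]
    using pointwise by (auto intro: sum_mono sum.cong)
qed

end
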